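(* Let $T$ be an $L_1$-periodic tiling of type $(\gamma_1,\gamma_2,\gamma_3)$ with $\gamma_1,\gamma_2,\gamma_3>0$. Then there is no infinite path in $T$. Equivalently, the cut quiver on $L_0/L_1$ (the quiver with vertices $L_0/L_1$ and the arrows in $T$) is acyclic.
   Context: Let $u^\top=(1,0)$, $v^\top=-(\tfrac12,\tfrac{\sqrt3}{2})$, $w=-(u+v)$, $L_0=\langle u,v\rangle$, and $L_1\le L_0$ a full-rank sublattice with $n=|L_0/L_1|$. An $L_1$-periodic tiling is an $L_1$-invariant map $T\colon L_0\to\{U,V,W\}$ such that for every $x$ exactly one of $T(x)=W$, $T(x+u)=V$, $T(x-v)=U$ holds; $T(x)$ removes one arrow of the upward triangle $x\to x+u\to x-v\to x$ ($U$: $x\to x+u$; $V$: $x-v\to x$; $W$: $x+u\to x-v$), and an arrow $x\to x+\alpha$ ($\alpha\in\{u,v,w\}$) is in $T$ if not removed; a path is in $T$ if all its arrows are. The type of $T$ is $(\#\tilde T^{-1}(U),\#\tilde T^{-1}(V),\#\tilde T^{-1}(W))$ for the induced map $\tilde T$ on $L_0/L_1$. *)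

theory Defs
  imports Main "HOL-Library.Product_Plus"
begin

text \<open>Coordinates: a point a*u + b*v of L0 = <u,v> is encoded as (a,b) :: int \<times> int.
  Hence u = (1,0), v = (0,1), w = -(u+v) = (-1,-1).\<close>

type_synonym pt = "int \<times> int"

definition u_vec :: pt where "u_vec = (1, 0)"
definition v_vec :: pt where "v_vec = (0, 1)"
definition w_vec :: pt where "w_vec = - (u_vec + v_vec)"

datatype tile = U | V | W

definition full_rank_sublattice :: "pt set \<Rightarrow> bool" where
  "full_rank_sublattice L \<longleftrightarrow>
     0 \<in> L \<and> (\<forall>x\<in>L. \<forall>y\<in>L. x + y \<in> L) \<and> (\<forall>x\<in>L. - x \<in> L) \<and>
     (\<exists>a\<in>L. \<exists>b\<in>L. fst a * snd b - snd a * fst b \<noteq> 0)"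

definition periodic_tiling :: "pt set \<Rightarrow> (pt \<Rightarrow> tile) \<Rightarrow> bool" where
  "periodic_tiling L T \<longleftrightarrow>
     (\<forall>x. \<forall>l\<in>L. T (x + l) = T x) \<and>
     (\<forall>x. (T x = W \<and> T (x + u_vec) \<noteq> V \<and> T (x - v_vec) \<noteq> U) \<or>
          (T x \<noteq> W \<and> T (x + u_vec) = V \<and> T (x - v_vec) \<noteq> U) \<or>
          (T x \<noteq> W \<and> T (x + u_vec) \<noteq> V \<and> T (x - v_vec) = U))"

definition coset :: "pt set \<Rightarrow> pt \<Rightarrow> pt set" where
  "coset L x = (\<lambda>l. x + l) ` L"

definition tile_count :: "pt set \<Rightarrow> (pt \<Rightarrow> tile) \<Rightarrow> tile \<Rightarrow> nat" where
  "tile_count L T t = card (coset L ` {x. T x = t})"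

definition tiling_type :: "pt set \<Rightarrow> (pt \<Rightarrow> tile) \<Rightarrow> nat \<times> nat \<times> nat" where
  "tiling_type L T = (tile_count L T U, tile_count L T V, tile_count L T W)"

text \<open>Arrow x\<rightarrow>x+u lies in the triangle at x (removed by U);
  arrow x\<rightarrow>x+v is the arrow (z-v)\<rightarrow>z of the triangle at z = x+v (removed by V);
  arrow x\<rightarrow>x+w is the arrow (z+u)\<rightarrow>(z-v) of the triangle at z = x-u (removed by W).\<close>
definition arrow_in :: "(pt \<Rightarrow> tile) \<Rightarrow> pt \<Rightarrow> pt \<Rightarrow> bool" where
  "arrow_in T x y \<longleftrightarrow>
     (y = x + u_vec \<and> T x \<noteq> U) \<or>
     (y = x + v_vec \<and> T (x + v_vec) \<noteq> V) \<or>
     (y = x + w_vec \<and> T (x - u_vec) \<noteq> W)"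

definition infinite_path_in :: "(pt \<Rightarrow> tile) \<Rightarrow> (nat \<Rightarrow> pt) \<Rightarrow> bool" where
  "infinite_path_in T p \<longleftrightarrow> (\<forall>k. arrow_in T (p k) (p (Suc k)))"

end

theory Submission
  imports Defs
begin

(* Weight every arrow x -> x + alpha by 1 if it lies in T and by -2 if it is removed. Each triangle
   of the lattice, upward or downward, loses exactly one of its three arrows, so the weights sum to
   zero around every triangle; hence they are the increments of a height function h on L0, which
   rises by exactly 1 along every arrow of T. The weights are L1-periodic, so h(x + l) - h(x)
   depends only on l in L1.
   An infinite path visits some class of L0/L1 twice, say p_b = p_a + l with l in L1 after
   m = b - a > 0 steps, so h(x + l) - h(x) = m for every x. Summing over the n classes of L0/L1
   and splitting each summand along the translated path, a step in direction alpha contributes the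
   total alpha-weight n - 3 gamma_alpha <= n - 3. Thus n m <= (n - 3) m, which is absurd. *)

lemma int_shift_invariant_const:
  fixes f :: "int \<Rightarrow> 'a"
  assumes "\<And>i. f (i + 1) = f i"
  shows "f i = f j"
proof -
  have "f k = f 0" for k
  proof (induction k rule: int_induct[where k = 0])
    case (step1 i)
    then show ?case using assms[of i] by simp
  next
    case (step2 i)
    then show ?case using assms[of "i - 1"] by simp
  qed simp
  then show ?thesis by metis
qed

lemma int_pair_shift_invariant_const:
  fixes G :: "int \<times> int \<Rightarrow> 'a"
  assumes "\<And>x. G (x + (1, 0)) = G x" and "\<And>x. G (x + (0, 1)) = G x"
  shows "G x = G y"
proof -
  have "G (a, b) = G (0, 0)" for a b
  proof -
    have "G (a, b) = G (0, b)"
      by (rule int_shift_invariant_const[of "\<lambda>a. G (a, b)"]) (use assms(1)[of "(_, b)"] in simp)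
    also have "\<dots> = G (0, 0)"
      by (rule int_shift_invariant_const[of "\<lambda>b. G (0, b)"]) (use assms(2)[of "(0, _)"] in simp)
    finally show ?thesis .
  qed
  then show ?thesis by (metis prod.collapse)
qed

definition int_prefix_sum :: "(int \<Rightarrow> 'a::ab_group_add) \<Rightarrow> int \<Rightarrow> 'a" where
  "int_prefix_sum f i = sum f {0..<i} - sum f {i..<0}"

lemma int_prefix_sum_0 [simp]: "int_prefix_sum f 0 = 0"
  by (simp add: int_prefix_sum_def)

lemma int_prefix_sum_step: "int_prefix_sum f (i + 1) = int_prefix_sum f i + f i"
proof (cases "i \<ge> 0")
  case True
  then have "{0..<i + 1} = insert i {0..<i}" and "{i + 1..<0} = {i..<0}" by auto
  then show ?thesis by (simp add: int_prefix_sum_def)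
next
  case False
  then have "{0..<i + 1} = {0..<i}" and "{i..<0} = insert i {i + 1..<0}" by auto
  then show ?thesis by (simp add: int_prefix_sum_def)
qed

lemma discrete_potential_exists:
  fixes f g :: "int \<times> int \<Rightarrow> 'a::ab_group_add"
  assumes closed: "\<And>x. f x + g (x + (1, 0)) = g x + f (x + (0, 1))"
  obtains h where "\<And>x. h (x + (1, 0)) = h x + f x" and "\<And>x. h (x + (0, 1)) = h x + g x"
proof -
  define h where
    "h x = int_prefix_sum (\<lambda>i. f (i, 0)) (fst x) + int_prefix_sum (\<lambda>j. g (fst x, j)) (snd x)" for x
  have h_v: "h (x + (0, 1)) = h x + g x" for x
    by (cases x) (simp add: h_def int_prefix_sum_step)
  have h_u: "h (x + (1, 0)) = h x + f x" for x
  proof (cases x)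
    case (Pair a b)
    define D where "D b = int_prefix_sum (\<lambda>j. g (a + 1, j)) b - int_prefix_sum (\<lambda>j. g (a, j)) b
      - (f (a, b) - f (a, 0))" for b
    have "D (b + 1) = D b" for b
      unfolding D_def int_prefix_sum_step using closed[of "(a, b)"] by (simp add: algebra_simps)
    then have "D b = D 0" by (rule int_shift_invariant_const)
    then show ?thesis
      using Pair unfolding D_def by (simp add: h_def int_prefix_sum_step) (simp add: algebra_simps)
  qed
  show thesis using that[OF h_u h_v] .
qed

definition arrow_weight :: "(pt \<Rightarrow> tile) \<Rightarrow> pt \<Rightarrow> pt \<Rightarrow> int" where
  "arrow_weight T \<alpha> x = (if arrow_in T x (x + \<alpha>) then 1 else -2)"

lemma arrow_in_step_iff:
  "arrow_in T x (x + u_vec) \<longleftrightarrow> T x \<noteq> U"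
  "arrow_in T x (x + v_vec) \<longleftrightarrow> T (x + v_vec) \<noteq> V"
  "arrow_in T x (x + w_vec) \<longleftrightarrow> T (x - u_vec) \<noteq> W"
  by (auto simp: arrow_in_def u_vec_def v_vec_def w_vec_def)

lemma arrow_in_imp_step:
  assumes "arrow_in T x y"
  obtains \<alpha> where "\<alpha> \<in> {u_vec, v_vec, w_vec}" and "y = x + \<alpha>" and "arrow_in T x (x + \<alpha>)"
  using assms that unfolding arrow_in_def by blast

lemma missing_arrow_exists:
  assumes "\<And>t. \<exists>x. T x = t" and "\<alpha> \<in> {u_vec, v_vec, w_vec}"
  obtains y where "\<not> arrow_in T y (y + \<alpha>)"
proof -
  obtain xU xV xW where "T xU = U" and "T xV = V" and "T xW = W"
    using assms(1) by metis
  then have "\<not> arrow_in T xU (xU + u_vec)" and "\<not> arrow_in T (xV - v_vec) (xV - v_vec + v_vec)"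
    and "\<not> arrow_in T (xW + u_vec) (xW + u_vec + w_vec)"
    unfolding arrow_in_step_iff by simp_all
  with assms(2) that show thesis by blast
qed

lemma up_triangle_weight:
  "arrow_weight T u_vec z + arrow_weight T w_vec (z + u_vec) + arrow_weight T v_vec (z - v_vec) = 0"
proof -
  have "arrow_in T (z - v_vec) z \<longleftrightarrow> T z \<noteq> V"
    using arrow_in_step_iff(2)[of T "z - v_vec"] by simp
  then show ?thesis by (cases "T z") (simp_all add: arrow_weight_def arrow_in_step_iff)
qed

lemma down_triangle_weight:
  assumes "periodic_tiling L T"
  shows "arrow_weight T w_vec (z + u_vec) + arrow_weight T u_vec (z - v_vec)
    + arrow_weight T v_vec (z + u_vec - v_vec) = 0"
proof -
  have "(T z = W \<and> T (z + u_vec) \<noteq> V \<and> T (z - v_vec) \<noteq> U) \<or>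
        (T z \<noteq> W \<and> T (z + u_vec) = V \<and> T (z - v_vec) \<noteq> U) \<or>
        (T z \<noteq> W \<and> T (z + u_vec) \<noteq> V \<and> T (z - v_vec) = U)"
    using assms unfolding periodic_tiling_def by blast
  moreover have "arrow_in T (z + u_vec - v_vec) (z + u_vec) \<longleftrightarrow> T (z + u_vec) \<noteq> V"
    using arrow_in_step_iff(2)[of T "z + u_vec - v_vec"] by simp
  ultimately show ?thesis by (auto simp: arrow_weight_def arrow_in_step_iff)
qed

definition height_function :: "(pt \<Rightarrow> tile) \<Rightarrow> (pt \<Rightarrow> int) \<Rightarrow> bool" where
  "height_function T h \<longleftrightarrow>
     (\<forall>x. \<forall>\<alpha>\<in>{u_vec, v_vec, w_vec}. h (x + \<alpha>) = h x + arrow_weight T \<alpha> x)"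

lemma height_function_exists:
  assumes "periodic_tiling L T"
  obtains h where "height_function T h"
proof -
  have closed: "arrow_weight T u_vec x + arrow_weight T v_vec (x + u_vec)
      = arrow_weight T v_vec x + arrow_weight T u_vec (x + v_vec)" for x
    using up_triangle_weight[of T "x + v_vec"] down_triangle_weight[OF assms, of "x + v_vec"]
    by (simp add: algebra_simps)
  obtain h where h_u: "\<And>x. h (x + u_vec) = h x + arrow_weight T u_vec x"
    and h_v: "\<And>x. h (x + v_vec) = h x + arrow_weight T v_vec x"
    using discrete_potential_exists[of "arrow_weight T u_vec" "arrow_weight T v_vec"] closed
    unfolding u_vec_def v_vec_def by blast
  have "h (x + w_vec) = h x + arrow_weight T w_vec x" for x
  proof -
    have "x + w_vec + u_vec = x - v_vec" by (simp add: w_vec_def)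
    then have "h (x - v_vec) = h (x + w_vec) + arrow_weight T u_vec (x + w_vec)"
      using h_u[of "x + w_vec"] by metis
    moreover have "h x = h (x - v_vec) + arrow_weight T v_vec (x - v_vec)"
      using h_v[of "x - v_vec"] by simp
    moreover have "x - u_vec + u_vec = x" and "x - u_vec - v_vec = x + w_vec"
      by (simp_all add: w_vec_def)
    then have "arrow_weight T w_vec x + arrow_weight T u_vec (x + w_vec)
        + arrow_weight T v_vec (x - v_vec) = 0"
      using down_triangle_weight[OF assms, of "x - u_vec"] by (simp only:)
    ultimately show ?thesis by linarith
  qed
  with h_u h_v have "height_function T h" unfolding height_function_def by blast
  then show thesis by (rule that)
qed

lemma height_function_arrow:
  assumes "height_function T h" and "arrow_in T x y"
  shows "h y = h x + 1"
proof -
  obtain \<alpha> where \<alpha>: "\<alpha> \<in> {u_vec, v_vec, w_vec}" and "y = x + \<alpha>" and "arrow_in T x (x + \<alpha>)"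
    using assms(2) by (rule arrow_in_imp_step)
  moreover have "h (x + \<alpha>) = h x + arrow_weight T \<alpha> x"
    using assms(1) \<alpha> unfolding height_function_def by blast
  ultimately show ?thesis by (simp add: arrow_weight_def)
qed

definition lattice_periodic :: "pt set \<Rightarrow> (pt \<Rightarrow> 'a) \<Rightarrow> bool" where
  "lattice_periodic L f \<longleftrightarrow> (\<forall>x. \<forall>l\<in>L. f (x + l) = f x)"

lemma lattice_periodicD: "lattice_periodic L f \<Longrightarrow> l \<in> L \<Longrightarrow> f (x + l) = f x"
  unfolding lattice_periodic_def by blast

lemma lattice_periodic_arrow_weight:
  assumes "periodic_tiling L T"
  shows "lattice_periodic L (arrow_weight T \<alpha>)"
proof -
  have T_per: "T (x + l) = T x" if "l \<in> L" for x l
    using assms that unfolding periodic_tiling_def by blast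
  have "arrow_in T (x + l) (x + l + \<alpha>) \<longleftrightarrow> arrow_in T x (x + \<alpha>)" if "l \<in> L" for x l
    using T_per[OF that, of "x + v_vec"] T_per[OF that, of "x - u_vec"] T_per[OF that, of x]
    unfolding arrow_in_def by (simp add: algebra_simps)
  then show ?thesis unfolding lattice_periodic_def arrow_weight_def by simp
qed

lemma height_function_period_diff:
  assumes "periodic_tiling L T" and "height_function T h" and "l \<in> L"
  shows "h (x + l) - h x = h (y + l) - h y"
proof (rule int_pair_shift_invariant_const[where G = "\<lambda>x. h (x + l) - h x"])
  have weight_per: "arrow_weight T \<alpha> (x + l) = arrow_weight T \<alpha> x" for \<alpha> x
    using lattice_periodicD[OF lattice_periodic_arrow_weight[OF assms(1)] assms(3)] .
  have step: "h (x + \<alpha> + l) - h (x + \<alpha>) = h (x + l) - h x" if "\<alpha> \<in> {u_vec, v_vec, w_vec}" for x \<alpha>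
  proof -
    have "h (x + l + \<alpha>) = h (x + l) + arrow_weight T \<alpha> (x + l)"
      and "h (x + \<alpha>) = h x + arrow_weight T \<alpha> x"
      using assms(2) that unfolding height_function_def by blast+
    moreover have "x + \<alpha> + l = x + l + \<alpha>" by (simp add: ac_simps)
    ultimately show ?thesis using weight_per[of \<alpha> x] by (simp only:)
  qed
  show "h (x + (1, 0) + l) - h (x + (1, 0)) = h (x + l) - h x" for x
    using step[of u_vec x] by (simp add: u_vec_def)
  show "h (x + (0, 1) + l) - h (x + (0, 1)) = h (x + l) - h x" for x
    using step[of v_vec x] by (simp add: v_vec_def)
qed

lemma coset_eq_imp_diff_in:
  assumes "0 \<in> L" and "coset L x = coset L y"
  shows "y - x \<in> L"
proof -
  have "y \<in> coset L x"
    using assms unfolding coset_def by (metis add.right_neutral image_eqI)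
  then obtain l where "l \<in> L" and "y = x + l" unfolding coset_def by blast
  then show ?thesis by simp
qed

lemma image_shift_coset: "(\<lambda>x. x + d) ` coset L y = coset L (y + d)"
  unfolding coset_def image_image by (simp add: ac_simps)

(* For L-periodic f the representative chosen by SOME is irrelevant, so this is the sum of the
   function induced on L0/L1. *)
definition coset_sum :: "pt set \<Rightarrow> (pt \<Rightarrow> int) \<Rightarrow> int" where
  "coset_sum L f = (\<Sum>c\<in>range (coset L). f (SOME x. x \<in> c))"

lemma coset_sum_add: "coset_sum L (\<lambda>x. f x + g x) = coset_sum L f + coset_sum L g"
  unfolding coset_sum_def by (rule sum.distrib)

lemma lattice_periodic_coset_rep:
  assumes "0 \<in> L" and "lattice_periodic L f"
  shows "f (SOME x. x \<in> coset L y) = f y"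
proof -
  have "y \<in> coset L y"
    using assms(1) unfolding coset_def by (metis add.right_neutral image_eqI)
  then have "(SOME x. x \<in> coset L y) \<in> coset L y" by (rule someI)
  then obtain l where "l \<in> L" and "(SOME x. x \<in> coset L y) = y + l" unfolding coset_def by blast
  then show ?thesis using assms(2) by (simp add: lattice_periodicD)
qed

lemma coset_sum_shift:
  assumes "0 \<in> L" and "lattice_periodic L f"
  shows "coset_sum L (\<lambda>x. f (x + d)) = coset_sum L f"
proof -
  let ?shift = "image (\<lambda>x. x + d)"
  have bij: "bij_betw ?shift (range (coset L)) (range (coset L))"
  proof (rule bij_betw_byWitness[where f' = "image (\<lambda>x. x - d)"])
    show "?shift ` range (coset L) \<subseteq> range (coset L)"
      by (auto simp: image_shift_coset)
    have "image (\<lambda>x. x - d) (coset L y) = coset L (y - d)" for y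
      using image_shift_coset[of "- d" L y] by simp
    then show "image (\<lambda>x. x - d) ` range (coset L) \<subseteq> range (coset L)"
      by auto
  qed (simp_all add: image_image)
  have shifted_periodic: "lattice_periodic L (\<lambda>x. f (x + d))"
    using assms(2) unfolding lattice_periodic_def by (metis add.commute add.left_commute)
  have "f ((SOME x. x \<in> c) + d) = f (SOME x. x \<in> ?shift c)" if c: "c \<in> range (coset L)" for c
  proof -
    obtain y where c: "c = coset L y" using c by blast
    show ?thesis
      unfolding c image_shift_coset
      using lattice_periodic_coset_rep[OF assms] lattice_periodic_coset_rep[OF assms(1) shifted_periodic]
      by simp
  qed
  then show ?thesis
    unfolding coset_sum_def using sum.reindex_bij_betw[OF bij, of "\<lambda>c. f (SOME x. x \<in> c)"]
    by simp
qed

lemma coset_sum_le_card_minus_3: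
  assumes "0 \<in> L" and fin: "finite (range (coset L))" and "lattice_periodic L f"
    and "\<And>x. f x \<le> 1" and "f y \<le> -2"
  shows "coset_sum L f \<le> int (card (range (coset L))) - 3"
proof -
  let ?Q = "range (coset L)" and ?rep = "\<lambda>c. SOME x. x \<in> c"
  have y: "coset L y \<in> ?Q" by simp
  have "coset_sum L f = f (?rep (coset L y)) + (\<Sum>c\<in>?Q - {coset L y}. f (?rep c))"
    unfolding coset_sum_def using sum.remove[OF fin y] .
  also have "\<dots> \<le> -2 + int (card (?Q - {coset L y}))"
    using lattice_periodic_coset_rep[OF assms(1,3)] assms(4,5)
    by (intro add_mono sum_bounded_above[where K = 1, simplified]) auto
  finally have "coset_sum L f \<le> -2 + int (card ?Q - 1)"
    using fin y by simp
  moreover have "card ?Q \<ge> 1"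
    using fin y by (metis One_nat_def Suc_leI card_gt_0_iff empty_iff)
  ultimately show ?thesis by (simp add: of_nat_diff)
qed

lemma height_along_path:
  assumes "height_function T h" and "infinite_path_in T p"
  shows "h (p k) = h (p 0) + int k"
proof (induction k)
  case (Suc k)
  then show ?case
    using height_function_arrow[OF assms(1), of "p k" "p (Suc k)"] assms(2)
    unfolding infinite_path_in_def by simp
qed simp

lemma path_coset_sum_bound:
  assumes "0 \<in> L" and tiling: "periodic_tiling L T" and "finite (range (coset L))"
    and "\<And>t. \<exists>x. T x = t" and h: "height_function T h" and path: "infinite_path_in T p"
    and "a \<le> b"
  shows "coset_sum L (\<lambda>x. h (x + (p b - p a)) - h x)
    \<le> (int (card (range (coset L))) - 3) * int (b - a)"
  using \<open>a \<le> b\<close>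
proof (induction b rule: dec_induct)
  case base
  then show ?case by (simp add: coset_sum_def)
next
  case (step k)
  obtain \<alpha> where \<alpha>: "\<alpha> \<in> {u_vec, v_vec, w_vec}" and next_k: "p (Suc k) = p k + \<alpha>"
    using path unfolding infinite_path_in_def by (metis arrow_in_imp_step)
  define d where "d = p k - p a"
  have "h (x + (p (Suc k) - p a)) - h x = (h (x + d) - h x) + arrow_weight T \<alpha> (x + d)" for x
  proof -
    have eq: "x + (p (Suc k) - p a) = x + d + \<alpha>" by (simp add: next_k d_def algebra_simps)
    have "h (x + d + \<alpha>) = h (x + d) + arrow_weight T \<alpha> (x + d)"
      using h \<alpha> unfolding height_function_def by blast
    then show ?thesis unfolding eq by simp
  qed
  then have "coset_sum L (\<lambda>x. h (x + (p (Suc k) - p a)) - h x)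
      = coset_sum L (\<lambda>x. h (x + d) - h x) + coset_sum L (\<lambda>x. arrow_weight T \<alpha> (x + d))"
    by (simp only: coset_sum_add)
  also have "coset_sum L (\<lambda>x. arrow_weight T \<alpha> (x + d)) = coset_sum L (arrow_weight T \<alpha>)"
    using coset_sum_shift[OF assms(1) lattice_periodic_arrow_weight[OF tiling]] .
  also obtain y where "\<not> arrow_in T y (y + \<alpha>)"
    using missing_arrow_exists[OF assms(4) \<alpha>] .
  then have "coset_sum L (arrow_weight T \<alpha>) \<le> int (card (range (coset L))) - 3"
    using coset_sum_le_card_minus_3[OF assms(1,3) lattice_periodic_arrow_weight[OF tiling]]
    by (simp add: arrow_weight_def)
  finally show ?case
    using step.IH step.hyps unfolding d_def by (simp add: of_nat_diff algebra_simps)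
qed

lemma no_infinite_path_in:
  assumes "0 \<in> L" and tiling: "periodic_tiling L T" and fin: "finite (range (coset L))"
    and "\<And>t. \<exists>x. T x = t"
  shows "\<not> infinite_path_in T p"
proof
  assume path: "infinite_path_in T p"
  obtain h where h: "height_function T h"
    using height_function_exists[OF tiling] .
  have "finite (range (\<lambda>k. coset L (p k)))"
    using fin by (rule finite_subset[rotated]) auto
  then have "\<not> inj (\<lambda>k. coset L (p k))"
    using finite_imageD infinite_UNIV_nat by blast
  then obtain a b where "a < b" and same_coset: "coset L (p a) = coset L (p b)"
    unfolding inj_def by (metis linorder_neqE_nat)
  define n where "n = int (card (range (coset L)))"
  have "h (x + (p b - p a)) - h x = h (p b) - h (p a)" for x
    using height_function_period_diff[OF tiling h coset_eq_imp_diff_in[OF assms(1) same_coset]]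
    by (metis add.commute diff_add_cancel)
  also have "\<dots> = int (b - a)"
    using height_along_path[OF h path, of a] height_along_path[OF h path, of b] \<open>a < b\<close> by simp
  finally have "coset_sum L (\<lambda>x. h (x + (p b - p a)) - h x) = n * int (b - a)"
    unfolding coset_sum_def n_def by simp
  moreover have "coset_sum L (\<lambda>x. h (x + (p b - p a)) - h x) \<le> (n - 3) * int (b - a)"
    unfolding n_def using path_coset_sum_bound[OF assms h path] \<open>a < b\<close> by simp
  ultimately show False using \<open>a < b\<close> by (simp add: algebra_simps)
qed

theorem lemma6p40:
  fixes L1 :: "pt set" and T :: "pt \<Rightarrow> tile" and \<gamma>1 \<gamma>2 \<gamma>3 :: nat
  assumes "full_rank_sublattice L1"
    and "periodic_tiling L1 T"
    and "tiling_type L1 T = (\<gamma>1, \<gamma>2, \<gamma>3)"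
    and "\<gamma>1 > 0" and "\<gamma>2 > 0" and "\<gamma>3 > 0"
  shows "\<not> (\<exists>p. infinite_path_in T p)"
proof -
  have "0 \<in> L1" using assms(1) by (simp add: full_rank_sublattice_def)
  have "tile_count L1 T t > 0" for t
    using assms(3-6) unfolding tiling_type_def by (cases t) auto
  \<comment> \<open>card is 0 on infinite sets, so positive tile counts also give finitely many classes\<close>
  then have fin: "finite (coset L1 ` {x. T x = t})" and "\<exists>x. T x = t" for t
    unfolding tile_count_def by (auto simp: card_gt_0_iff)
  have "range (coset L1)
      = coset L1 ` {x. T x = U} \<union> coset L1 ` {x. T x = V} \<union> coset L1 ` {x. T x = W}"
    by (auto intro: tile.exhaust)
  then have "finite (range (coset L1))" using fin by simp
  then show ?thesis using no_infinite_path_in \<open>0 \<in> L1\<close> assms(2) \<open>\<And>t. \<exists>x. T x = t\<close> by blast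
qed

end
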